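(* Let $m\ge2$ and let $\mathcal{C}\in\mathbb{S}_{m,n}$ be the symmetric Cauchy tensor with generating vector $c=(c_1,\dots,c_n)^T$, where $c>0$. The following are equivalent: (i) $c_1,\dots,c_n$ are mutually distinct; (ii) $\mathcal{C}$ is strongly doubly nonnegative; (iii) $\mathcal{C}$ is strongly completely positive.
   Context: The symmetric Cauchy tensor with generating vector $c$ has entries $1/(c_{i_1}+\dots+c_{i_m})$. $(\mathcal{A}x^{m-1})_i=\sum_{i_2,\dots,i_m}a_{ii_2\ldots i_m}x_{i_2}\cdots x_{i_m}$; an H-eigenvalue is $\lambda\in\mathbb{R}$ with $\mathcal{A}x^{m-1}=\lambda(x_i^{m-1})_i$ for some nonzero $x\in\mathbb{R}^n$. Strongly doubly nonnegative: all entries nonnegative and all H-eigenvalues positive. Strongly completely positive: $\mathcal{A}=\sum_{k=1}^r(u^{(k)})^m$ with $u^{(k)}\in\mathbb{R}^n_+$ and $\mathrm{span}\{u^{(1)},\dots,u^{(r)}\}=\mathbb{R}^n$, where $(u^m)_{i_1\ldots i_m}=u_{i_1}\cdots u_{i_m}$. *)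

theory Defs
  imports "HOL-Analysis.Analysis"
begin

text \<open>Tensors of order m and dimension n = CARD('n): real-valued functions on index
  lists of length m over the finite index type 'n (values on lists of other lengths
  are irrelevant).\<close>

type_synonym 'n tensor = "'n list \<Rightarrow> real"

definition index_lists :: "nat \<Rightarrow> 'n list set" where
  "index_lists k = {is. length is = k}"

definition cauchy_tensor :: "real^'n \<Rightarrow> 'n tensor" where
  "cauchy_tensor c = (\<lambda>is. 1 / sum_list (map (\<lambda>i. c $ i) is))"

definition tensor_apply :: "nat \<Rightarrow> ('n::finite) tensor \<Rightarrow> real^'n \<Rightarrow> 'n \<Rightarrow> real" where
  "tensor_apply m A x i =
     (\<Sum>is\<in>index_lists (m - 1). A (i # is) * prod_list (map (\<lambda>j. x $ j) is))"

definition H_eigenvalue :: "nat \<Rightarrow> ('n::finite) tensor \<Rightarrow> real \<Rightarrow> bool" where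
  "H_eigenvalue m A lam \<longleftrightarrow>
     (\<exists>x. x \<noteq> 0 \<and> (\<forall>i. tensor_apply m A x i = lam * (x $ i) ^ (m - 1)))"

definition strongly_doubly_nonnegative :: "nat \<Rightarrow> ('n::finite) tensor \<Rightarrow> bool" where
  "strongly_doubly_nonnegative m A \<longleftrightarrow>
     (\<forall>is\<in>index_lists m. A is \<ge> 0) \<and> (\<forall>lam. H_eigenvalue m A lam \<longrightarrow> lam > 0)"

definition rank_one :: "real^'n \<Rightarrow> 'n tensor" where
  "rank_one u = (\<lambda>is. prod_list (map (\<lambda>i. u $ i) is))"

definition strongly_completely_positive :: "nat \<Rightarrow> ('n::finite) tensor \<Rightarrow> bool" where
  "strongly_completely_positive m A \<longleftrightarrow>
     (\<exists>us :: (real^'n) list.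
        (\<forall>u\<in>set us. \<forall>i. u $ i \<ge> 0) \<and>
        span (set us) = UNIV \<and>
        (\<forall>is\<in>index_lists m. A is = (\<Sum>u\<leftarrow>us. rank_one u is)))"

end

theory Submission
  imports Defs "HOL-Real_Asymp.Real_Asymp"
begin

text \<open>
  Every Cauchy tensor with positive generator is completely positive: 1/s is the limit as q \<rightarrow> 1 of
  (1 - q)/(1 - q^s) = \<Sum>k (1 - q) q^(k s), and with s = c_i1 + ... + c_im every summand is an entry
  of a nonnegative rank-one tensor. A conic Caratheodory argument bounds the number of rank-one terms
  by the number of entries, so that nonnegative rank-one decompositions pass to the limit by compactness.

  For A = \<Sum>k u_k^m with nonnegative u_k, an H-eigenvector for an eigenvalue \<lambda> \<le> 0 is
  orthogonal to all u_k (contract with x if m is even, compare signs entrywise if m is odd), and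
  conversely every nonzero x orthogonal to all u_k is an H-eigenvector for 0. Hence A is strongly
  doubly nonnegative iff the u_k span \<real>^n, which makes (ii) and (iii) equivalent.

  If c_a = c_b for a \<noteq> b, then e_a - e_b is an H-eigenvector of the Cauchy tensor for 0. If the c_i
  are distinct and x is orthogonal to all u_k, evaluating the decomposition at the entries
  (i, j, ..., j) gives \<Sum>i x_i / (c_i + (m - 1) c_j) = 0 for all j, a nonsingular Cauchy system.
\<close>

lemma finite_index_lists [simp]: "finite (index_lists k :: 'n::finite list set)"
  using finite_lists_length_eq[of "UNIV :: 'n set" k] by (simp add: index_lists_def)

lemma index_lists_0 [simp]: "index_lists 0 = {[]}"
  by (auto simp: index_lists_def)

lemma sum_index_lists_Suc:
  "(\<Sum>is\<in>index_lists (Suc k). f is) = (\<Sum>j\<in>UNIV. \<Sum>is\<in>index_lists k. f (j # is))"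
  for f :: "'n::finite list \<Rightarrow> 'a::comm_monoid_add"
proof -
  have split: "index_lists (Suc k) = (\<lambda>(j, is). j # is) ` (UNIV \<times> index_lists k)"
    by (auto simp: index_lists_def length_Suc_conv)
  have "inj_on (\<lambda>(j, is). j # is) (UNIV \<times> index_lists k)"
    by (auto simp: inj_on_def)
  then have "(\<Sum>is\<in>index_lists (Suc k). f is) = (\<Sum>(j, is)\<in>UNIV \<times> index_lists k. f (j # is))"
    unfolding split by (subst sum.reindex) (simp_all add: case_prod_unfold)
  then show ?thesis
    by (simp add: sum.cartesian_product)
qed

lemma sum_index_lists_prod_list:
  "(\<Sum>is\<in>index_lists k. prod_list (map g is)) = (\<Sum>j\<in>UNIV. g j) ^ k"
  for g :: "'n::finite \<Rightarrow> 'a::comm_semiring_1"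
proof (induction k)
  case (Suc k)
  have "(\<Sum>is\<in>index_lists (Suc k). prod_list (map g is))
      = (\<Sum>j\<in>UNIV. g j * (\<Sum>is\<in>index_lists k. prod_list (map g is)))"
    by (simp add: sum_index_lists_Suc sum_distrib_left)
  with Suc.IH show ?case
    by (simp add: sum_distrib_right)
qed simp

lemma sum_sum_list_commute:
  "(\<Sum>x\<in>A. \<Sum>u\<leftarrow>us. f u x) = (\<Sum>u\<leftarrow>us. \<Sum>x\<in>A. f u x)"
  by (induction us) (simp_all add: sum.distrib)

lemma rank_one_Nil [simp]: "rank_one u [] = 1"
  by (simp add: rank_one_def)

lemma rank_one_Cons [simp]: "rank_one u (i # is) = u $ i * rank_one u is"
  by (simp add: rank_one_def)

lemma rank_one_nonneg: "(\<And>i. 0 \<le> u $ i) \<Longrightarrow> 0 \<le> rank_one u is"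
  by (induction "is") auto

lemma rank_one_scaleR: "rank_one (a *\<^sub>R u) is = a ^ length is * rank_one u is"
  by (induction "is") auto

lemma rank_one_zero: "is \<noteq> [] \<Longrightarrow> rank_one 0 is = 0"
  by (cases "is") auto

lemma rank_one_replicate: "rank_one u (replicate k i) = (u $ i) ^ k"
  by (induction k) auto

lemma tendsto_rank_one: "w \<longlonglongrightarrow> v \<Longrightarrow> (\<lambda>j. rank_one (w j) is) \<longlonglongrightarrow> rank_one v is"
  by (induction "is") (auto intro!: tendsto_mult tendsto_vec_nth)

lemma sum_index_lists_rank_one_mult:
  "(\<Sum>is\<in>index_lists k. rank_one u is * prod_list (map (\<lambda>j. x $ j) is)) = (u \<bullet> x) ^ k"
proof -
  have "rank_one u is * prod_list (map (\<lambda>j. x $ j) is) = prod_list (map (\<lambda>j. u $ j * x $ j) is)"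
    for "is" by (induction "is") simp_all
  then show ?thesis
    by (simp add: sum_index_lists_prod_list inner_vec_def)
qed

lemma tensor_apply_sum_rank_one:
  assumes "m \<ge> 1" and A: "\<forall>is\<in>index_lists m. A is = (\<Sum>u\<leftarrow>us. rank_one u is)"
  shows "tensor_apply m A x i = (\<Sum>u\<leftarrow>us. u $ i * (u \<bullet> x) ^ (m - 1))"
proof -
  have "i # is \<in> index_lists m" if "is \<in> index_lists (m - 1)" for "is"
    using that \<open>m \<ge> 1\<close> by (auto simp: index_lists_def)
  then have "tensor_apply m A x i =
      (\<Sum>is\<in>index_lists (m - 1). \<Sum>u\<leftarrow>us. u $ i * (rank_one u is * prod_list (map (\<lambda>j. x $ j) is)))"
    unfolding tensor_apply_def using A
    by (intro sum.cong) (simp_all add: sum_list_mult_const[symmetric] mult.assoc)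
  also have "\<dots> = (\<Sum>u\<leftarrow>us. u $ i * (u \<bullet> x) ^ (m - 1))"
    by (simp add: sum_sum_list_commute sum_distrib_left[symmetric] sum_index_lists_rank_one_mult)
  finally show ?thesis .
qed

lemma orthogonal_of_nonpos_H_eigenvector_even:
  assumes "even m" "m \<ge> 2" and A: "\<forall>is\<in>index_lists m. A is = (\<Sum>u\<leftarrow>us. rank_one u is)"
    and eig: "\<And>i. tensor_apply m A x i = lam * (x $ i) ^ (m - 1)" and "lam \<le> 0"
  shows "\<forall>u\<in>set us. u \<bullet> x = 0"
proof -
  obtain k where m: "m = Suc k"
    using \<open>m \<ge> 2\<close> by (cases m) auto
  have "(\<Sum>i\<in>UNIV. x $ i * tensor_apply m A x i)
      = (\<Sum>i\<in>UNIV. \<Sum>u\<leftarrow>us. x $ i * u $ i * (u \<bullet> x) ^ (m - 1))"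
    using \<open>m \<ge> 2\<close>
    by (simp add: tensor_apply_sum_rank_one[OF _ A] sum_list_const_mult[symmetric] mult.assoc)
  also have "\<dots> = (\<Sum>u\<leftarrow>us. (u \<bullet> x) * (u \<bullet> x) ^ (m - 1))"
    by (simp add: sum_sum_list_commute sum_distrib_right[symmetric] inner_vec_def mult.commute)
  finally have "(\<Sum>u\<leftarrow>us. (u \<bullet> x) ^ m) = (\<Sum>i\<in>UNIV. x $ i * tensor_apply m A x i)"
    by (simp add: m)
  also have "\<dots> = lam * (\<Sum>i\<in>UNIV. (x $ i) ^ m)"
    by (simp add: eig sum_distrib_left) (simp add: m mult.left_commute)
  also have "\<dots> \<le> 0"
    using \<open>lam \<le> 0\<close> \<open>even m\<close> by (simp add: mult_nonpos_nonneg sum_nonneg zero_le_even_power)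
  finally have "(\<Sum>u\<leftarrow>us. (u \<bullet> x) ^ m) = 0"
    using \<open>even m\<close> by (intro antisym sum_list_nonneg) (auto simp: zero_le_even_power)
  then show ?thesis
    using \<open>even m\<close> \<open>m \<ge> 2\<close> by (subst (asm) sum_list_nonneg_eq_0_iff) (auto simp: zero_le_even_power)
qed

lemma orthogonal_of_nonpos_H_eigenvector_odd:
  assumes "odd m" and nonneg: "\<forall>u\<in>set us. \<forall>i. 0 \<le> u $ i"
    and A: "\<forall>is\<in>index_lists m. A is = (\<Sum>u\<leftarrow>us. rank_one u is)"
    and eig: "\<And>i. tensor_apply m A x i = lam * (x $ i) ^ (m - 1)" and "lam \<le> 0"
  shows "\<forall>u\<in>set us. u \<bullet> x = 0"
proof
  fix u assume u: "u \<in> set us"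
  have "even (m - 1)" "m \<ge> 1"
    using \<open>odd m\<close> by (cases m; simp)+
  have terms_nonneg: "\<forall>v\<in>set us. 0 \<le> v $ i * (v \<bullet> x) ^ (m - 1)" for i
    using nonneg \<open>even (m - 1)\<close> by (auto simp: zero_le_even_power)
  have "(\<Sum>v\<leftarrow>us. v $ i * (v \<bullet> x) ^ (m - 1)) \<le> 0" for i
    using eig[of i] tensor_apply_sum_rank_one[OF \<open>m \<ge> 1\<close> A, of x i] \<open>lam \<le> 0\<close> \<open>even (m - 1)\<close>
    by (simp add: mult_nonpos_nonneg zero_le_even_power)
  then have "(\<Sum>v\<leftarrow>us. v $ i * (v \<bullet> x) ^ (m - 1)) = 0" for i
    using terms_nonneg by (intro antisym sum_list_nonneg) auto
  then have "u $ i * (u \<bullet> x) ^ (m - 1) = 0" for i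
    using terms_nonneg u by (subst (asm) sum_list_nonneg_eq_0_iff) auto
  then show "u \<bullet> x = 0"
    by (metis inner_zero_left power_eq_0_iff vec_eq_iff zero_index mult_eq_0_iff)
qed

lemma orthogonal_of_nonpos_H_eigenvector:
  assumes "m \<ge> 2" and "\<forall>u\<in>set us. \<forall>i. 0 \<le> u $ i"
    and "\<forall>is\<in>index_lists m. A is = (\<Sum>u\<leftarrow>us. rank_one u is)"
    and "\<And>i. tensor_apply m A x i = lam * (x $ i) ^ (m - 1)" and "lam \<le> 0"
  shows "\<forall>u\<in>set us. u \<bullet> x = 0"
  using orthogonal_of_nonpos_H_eigenvector_even[of m A us x lam]
    orthogonal_of_nonpos_H_eigenvector_odd[of m us A x lam] assms
  by blast

lemma H_eigenvalue_zero_of_orthogonal: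
  assumes "m \<ge> 2" and A: "\<forall>is\<in>index_lists m. A is = (\<Sum>u\<leftarrow>us. rank_one u is)"
    and "x \<noteq> 0" and orth: "\<forall>u\<in>set us. u \<bullet> x = 0"
  shows "H_eigenvalue m A 0"
  unfolding H_eigenvalue_def
proof (intro exI conjI allI)
  fix i
  have "tensor_apply m A x i = (\<Sum>u\<leftarrow>us. u $ i * (u \<bullet> x) ^ (m - 1))"
    using \<open>m \<ge> 2\<close> by (simp add: tensor_apply_sum_rank_one[OF _ A])
  also have "\<dots> = (\<Sum>u\<leftarrow>us. 0)"
    using \<open>m \<ge> 2\<close> orth by (intro arg_cong[where f = sum_list] map_cong) auto
  finally show "tensor_apply m A x i = 0 * (x $ i) ^ (m - 1)"
    by simp
qed fact

lemma span_eq_UNIV_iff_orthogonal_zero: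
  fixes S :: "'a::euclidean_space set"
  shows "span S = UNIV \<longleftrightarrow> (\<forall>x. (\<forall>u\<in>S. u \<bullet> x = 0) \<longrightarrow> x = 0)"
proof
  assume "span S = UNIV"
  then show "\<forall>x. (\<forall>u\<in>S. u \<bullet> x = 0) \<longrightarrow> x = 0"
    using orthogonal_to_span[of _ S] by (metis UNIV_I inner_commute inner_eq_zero_iff orthogonal_def)
next
  assume "\<forall>x. (\<forall>u\<in>S. u \<bullet> x = 0) \<longrightarrow> x = 0"
  then show "span S = UNIV"
    using span_not_UNIV_orthogonal span_base by (metis inner_commute)
qed

lemma strongly_doubly_nonnegative_sum_rank_one_iff:
  fixes us :: "(real^'n::finite) list"
  assumes "m \<ge> 2" and nonneg: "\<forall>u\<in>set us. \<forall>i. 0 \<le> u $ i"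
    and A: "\<forall>is\<in>index_lists m. A is = (\<Sum>u\<leftarrow>us. rank_one u is)"
  shows "strongly_doubly_nonnegative m A \<longleftrightarrow> span (set us) = UNIV"
proof -
  have "\<forall>is\<in>index_lists m. 0 \<le> A is"
    using nonneg A by (auto intro!: sum_list_nonneg rank_one_nonneg)
  moreover have "(\<forall>lam. H_eigenvalue m A lam \<longrightarrow> lam > 0) \<longleftrightarrow> span (set us) = UNIV"
    unfolding span_eq_UNIV_iff_orthogonal_zero
  proof (intro iffI allI impI)
    fix x :: "real^'n" assume "\<forall>lam. H_eigenvalue m A lam \<longrightarrow> lam > 0" "\<forall>u\<in>set us. u \<bullet> x = 0"
    then show "x = 0"
      using H_eigenvalue_zero_of_orthogonal[OF \<open>m \<ge> 2\<close> A] by fastforce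
  next
    fix lam assume span: "\<forall>x. (\<forall>u\<in>set us. u \<bullet> x = 0) \<longrightarrow> x = 0" and "H_eigenvalue m A lam"
    then obtain x where "x \<noteq> 0" and eig: "\<And>i. tensor_apply m A x i = lam * (x $ i) ^ (m - 1)"
      unfolding H_eigenvalue_def by blast
    then show "lam > 0"
      using orthogonal_of_nonpos_H_eigenvector[OF \<open>m \<ge> 2\<close> nonneg A eig] span by force
  qed
  ultimately show ?thesis
    unfolding strongly_doubly_nonnegative_def by blast
qed

lemma strongly_completely_positive_imp_strongly_doubly_nonnegative:
  assumes "m \<ge> 2" and "strongly_completely_positive m A"
  shows "strongly_doubly_nonnegative m A"
  using assms strongly_doubly_nonnegative_sum_rank_one_iff[OF \<open>m \<ge> 2\<close>]
  unfolding strongly_completely_positive_def by blast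

lemma cauchy_tensor_H_eigenvalue_zero:
  fixes c :: "real^'n::finite"
  assumes "m \<ge> 2" and "c $ a = c $ b" "a \<noteq> b"
  shows "H_eigenvalue m (cauchy_tensor c) 0"
  unfolding H_eigenvalue_def
proof (intro exI conjI allI)
  let ?x = "axis a (1::real) - axis b 1"
  show "?x \<noteq> 0"
    using \<open>a \<noteq> b\<close> by (auto simp: vec_eq_iff axis_def)
  have contract: "(\<Sum>j\<in>UNIV. ?x $ j * g j) = g a - g b" for g :: "'n \<Rightarrow> real"
  proof -
    have "?x $ j * g j = (if j = a then g j else 0) - (if j = b then g j else 0)" for j
      by (simp add: axis_def)
    then show ?thesis
      by (simp add: sum_subtractf)
  qed
  fix i
  obtain k where k: "m - 1 = Suc k"
    using \<open>m \<ge> 2\<close> by (intro that[of "m - 2"]) simp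
  have "tensor_apply m (cauchy_tensor c) ?x i =
     (\<Sum>is\<in>index_lists k. prod_list (map (\<lambda>j. ?x $ j) is) *
        (\<Sum>j\<in>UNIV. ?x $ j * (1 / (c $ i + c $ j + sum_list (map (\<lambda>j. c $ j) is)))))"
    unfolding tensor_apply_def k sum_index_lists_Suc cauchy_tensor_def
    by (subst sum.swap) (simp add: sum_distrib_left mult_ac add.assoc)
  also have "\<dots> = 0"
    by (simp only: contract \<open>c $ a = c $ b\<close>) simp
  finally show "tensor_apply m (cauchy_tensor c) ?x i = 0 * ?x $ i ^ (m - 1)"
    by simp
qed

lemma cauchy_sum_elimination:
  fixes c w :: "'i \<Rightarrow> 'a::field"
  assumes "finite I" "i0 \<notin> I" and nz: "c i0 + r \<noteq> 0" "c i0 + r' \<noteq> 0"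
    "\<forall>i\<in>I. c i + r \<noteq> 0 \<and> c i + r' \<noteq> 0"
  shows "(c i0 + r) * (\<Sum>i\<in>insert i0 I. w i / (c i + r))
       - (c i0 + r') * (\<Sum>i\<in>insert i0 I. w i / (c i + r'))
       = (r' - r) * (\<Sum>i\<in>I. w i * (c i0 - c i) / (c i + r') / (c i + r))"
proof -
  have "(c i0 + r) * (\<Sum>i\<in>insert i0 I. w i / (c i + r))
       - (c i0 + r') * (\<Sum>i\<in>insert i0 I. w i / (c i + r'))
      = (\<Sum>i\<in>I. (c i0 + r) * (w i / (c i + r)) - (c i0 + r') * (w i / (c i + r')))"
    using assms by (simp add: distrib_left sum_distrib_left sum_subtractf)
  also have "\<dots> = (\<Sum>i\<in>I. (r' - r) * (w i * (c i0 - c i) / (c i + r') / (c i + r)))"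
    using nz(3) by (intro sum.cong) (simp_all add: field_simps)
  finally show ?thesis
    by (simp add: sum_distrib_left)
qed

lemma cauchy_matrix_kernel_trivial:
  fixes c w :: "'i \<Rightarrow> 'a::field"
  assumes "finite I" "inj_on c I" "finite R" "card I \<le> card R"
    and "\<forall>i\<in>I. \<forall>r\<in>R. c i + r \<noteq> 0"
    and "\<forall>r\<in>R. (\<Sum>i\<in>I. w i / (c i + r)) = 0"
  shows "\<forall>i\<in>I. w i = 0"
  using assms
proof (induction I arbitrary: w R rule: finite_induct)
  case (insert i0 I w R)
  then obtain r' where r': "r' \<in> R"
    by fastforce
  have nz: "\<forall>i\<in>insert i0 I. \<forall>r\<in>R. c i + r \<noteq> 0"
    using insert.prems by blast
  define w' where "w' i = w i * (c i0 - c i) / (c i + r')" for i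
  have "\<forall>i\<in>I. w' i = 0"
  proof (rule insert.IH)
    show "inj_on c I" "finite (R - {r'})"
      using insert.prems by (auto simp: inj_on_insert)
    show "card I \<le> card (R - {r'})"
      using insert r' by simp
    show "\<forall>i\<in>I. \<forall>r\<in>R - {r'}. c i + r \<noteq> 0"
      using nz by blast
    show "\<forall>r\<in>R - {r'}. (\<Sum>i\<in>I. w' i / (c i + r)) = 0"
    proof
      fix r assume r: "r \<in> R - {r'}"
      have "(r' - r) * (\<Sum>i\<in>I. w' i / (c i + r)) = 0"
        using cauchy_sum_elimination[of I i0 c r r' w] insert r r' nz unfolding w'_def by auto
      then show "(\<Sum>i\<in>I. w' i / (c i + r)) = 0"
        using r by auto
    qed
  qed
  moreover have "c i0 \<noteq> c i" if "i \<in> I" for i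
    using insert that by (auto simp: inj_on_def)
  ultimately have wI: "\<forall>i\<in>I. w i = 0"
    using nz r' by (auto simp: w'_def)
  moreover have "(\<Sum>i\<in>insert i0 I. w i / (c i + r')) = 0"
    using insert.prems r' by blast
  ultimately have "w i0 / (c i0 + r') = 0"
    using insert.hyps by simp
  then have "w i0 = 0"
    using nz r' by simp
  with wI show ?case
    by simp
qed simp

lemma cauchy_tensor_decomposition_spans:
  fixes c :: "real^'n::finite" and us :: "(real^'n) list"
  assumes "m \<ge> 2" and pos: "\<forall>i. c $ i > 0" and inj: "inj (\<lambda>i. c $ i)"
    and dec: "\<forall>is\<in>index_lists m. cauchy_tensor c is = (\<Sum>u\<leftarrow>us. rank_one u is)"
  shows "span (set us) = UNIV"
  unfolding span_eq_UNIV_iff_orthogonal_zero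
proof (intro allI impI)
  fix x :: "real^'n" assume orth: "\<forall>u\<in>set us. u \<bullet> x = 0"
  let ?R = "range (\<lambda>j. real (m - 1) * c $ j)"
  have "card ?R = CARD('n)"
    using inj \<open>m \<ge> 2\<close> by (intro card_image) (auto simp: inj_def)
  moreover have "(\<Sum>i\<in>UNIV. x $ i / (c $ i + r)) = 0" if "r \<in> ?R" for r
  proof -
    obtain j where r: "r = real (m - 1) * c $ j"
      using \<open>r \<in> ?R\<close> by blast
    define js where "js = replicate (m - 1) j"
    have "cauchy_tensor c (i # js) = 1 / (c $ i + r)" for i
      by (simp add: cauchy_tensor_def js_def r sum_list_replicate)
    then have "(\<Sum>i\<in>UNIV. x $ i / (c $ i + r)) = (\<Sum>i\<in>UNIV. x $ i * cauchy_tensor c (i # js))"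
      by simp
    also have "\<dots> = (\<Sum>i\<in>UNIV. \<Sum>u\<leftarrow>us. x $ i * rank_one u (i # js))"
      using dec \<open>m \<ge> 2\<close> by (simp add: js_def index_lists_def sum_list_const_mult)
    also have "\<dots> = (\<Sum>u\<leftarrow>us. (u \<bullet> x) * rank_one u js)"
      by (simp add: sum_sum_list_commute inner_vec_def sum_distrib_left mult_ac)
    also have "\<dots> = 0"
      using orth by (simp cong: map_cong)
    finally show ?thesis .
  qed
  moreover have "c $ i + r \<noteq> 0" if "r \<in> ?R" for i r
  proof -
    have "r \<ge> 0"
      using that pos by (force intro: mult_nonneg_nonneg less_imp_le)
    then show ?thesis
      using pos[rule_format, of i] by linarith
  qed
  ultimately have "\<forall>i\<in>UNIV. x $ i = 0"
    using inj by (intro cauchy_matrix_kernel_trivial[where c = "\<lambda>i. c $ i" and R = ?R]) auto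
  then show "x = 0"
    by (simp add: vec_eq_iff)
qed

lemma exists_linear_dependence:
  fixes F :: "'k \<Rightarrow> 'i \<Rightarrow> real"
  assumes "finite I" "finite K" "card I < card K"
  shows "\<exists>\<mu>. (\<exists>k\<in>K. \<mu> k \<noteq> 0) \<and> (\<forall>i\<in>I. (\<Sum>k\<in>K. \<mu> k * F k i) = 0)"
  using assms
proof (induction I arbitrary: K F rule: finite_induct)
  case empty
  then obtain k where "k \<in> K"
    by fastforce
  then show ?case
    by (intro exI[of _ "\<lambda>j. if j = k then 1 else 0"]) auto
next
  case (insert i0 I K F)
  show ?case
  proof (cases "\<forall>k\<in>K. F k i0 = 0")
    case True
    obtain \<mu> where "\<exists>k\<in>K. \<mu> k \<noteq> 0" "\<forall>i\<in>I. (\<Sum>k\<in>K. \<mu> k * F k i) = 0"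
      using insert.IH[of K F] insert.prems insert.hyps by auto
    with True show ?thesis
      by auto
  next
    case False
    then obtain k0 where k0: "k0 \<in> K" "F k0 i0 \<noteq> 0"
      by auto
    text \<open>Gaussian elimination: clear coordinate i0 using the row k0, then recurse on the other rows.\<close>
    define G where "G k i = F k i - F k i0 / F k0 i0 * F k0 i" for k i
    obtain \<mu>' where \<mu>': "\<exists>k\<in>K - {k0}. \<mu>' k \<noteq> 0" "\<forall>i\<in>I. (\<Sum>k\<in>K - {k0}. \<mu>' k * G k i) = 0"
    proof -
      have "card I < card (K - {k0})"
        using insert.prems insert.hyps k0 by simp
      then show ?thesis
        using insert.IH[of "K - {k0}" G] insert.prems that by blast
    qed
    define \<mu> where "\<mu> k = (if k = k0 then - (\<Sum>j\<in>K - {k0}. \<mu>' j * F j i0) / F k0 i0 else \<mu>' k)" for k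
    have reduced: "(\<Sum>k\<in>K. \<mu> k * F k i) = (\<Sum>k\<in>K - {k0}. \<mu>' k * G k i)" for i
    proof -
      have "(\<Sum>k\<in>K - {k0}. \<mu> k * F k i)
          = (\<Sum>k\<in>K - {k0}. \<mu>' k * G k i + \<mu>' k * F k i0 * (F k0 i / F k0 i0))"
        by (intro sum.cong) (auto simp: \<mu>_def G_def algebra_simps)
      also have "\<dots> = (\<Sum>k\<in>K - {k0}. \<mu>' k * G k i) + (\<Sum>k\<in>K - {k0}. \<mu>' k * F k i0) * (F k0 i / F k0 i0)"
        by (simp add: sum.distrib sum_distrib_right sum_divide_distrib)
      finally show ?thesis
        using insert.prems k0 by (simp add: sum.remove[of K k0] \<mu>_def)
    qed
    have "G k i0 = 0" for k
      using k0(2) by (simp add: G_def)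
    then have "\<forall>i\<in>insert i0 I. (\<Sum>k\<in>K. \<mu> k * F k i) = 0"
      using \<mu>'(2) by (simp add: reduced)
    moreover have "\<exists>k\<in>K. \<mu> k \<noteq> 0"
      using \<mu>'(1) by (auto simp: \<mu>_def)
    ultimately show ?thesis
      by blast
  qed
qed

lemma conic_combination_drop_one:
  fixes F :: "'k \<Rightarrow> 'i \<Rightarrow> real"
  assumes "finite I" "finite K" "card I < card K" and nonneg: "\<forall>k\<in>K. 0 \<le> a k"
  shows "\<exists>k1\<in>K. \<exists>a'. (\<forall>k\<in>K. 0 \<le> a' k) \<and>
           (\<forall>i\<in>I. (\<Sum>k\<in>K. a k * F k i) = (\<Sum>k\<in>K - {k1}. a' k * F k i))"
proof -
  obtain \<mu> where \<mu>: "\<exists>k\<in>K. \<mu> k \<noteq> 0" "\<forall>i\<in>I. (\<Sum>k\<in>K. \<mu> k * F k i) = 0"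
    using exists_linear_dependence[OF assms(1-3)] by blast
  obtain \<nu> where \<nu>: "\<exists>k\<in>K. \<nu> k > 0" "\<forall>i\<in>I. (\<Sum>k\<in>K. \<nu> k * F k i) = 0"
  proof (cases "\<exists>k\<in>K. \<mu> k > 0")
    case True
    then show ?thesis
      using \<mu>(2) by (rule that)
  next
    case False
    with \<mu>(1) have "\<exists>k\<in>K. - \<mu> k > 0"
      by (metis less_eq_real_def neg_0_less_iff_less not_less)
    moreover have "\<forall>i\<in>I. (\<Sum>k\<in>K. - \<mu> k * F k i) = 0"
      using \<mu>(2) by (simp add: sum_negf)
    ultimately show ?thesis
      by (rule that)
  qed
  text \<open>Subtract the largest multiple \<theta> \<nu> that keeps all coefficients nonnegative; one of them becomes zero.\<close>
  define P where "P = {k\<in>K. \<nu> k > 0}"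
  define \<theta> where "\<theta> = Min ((\<lambda>k. a k / \<nu> k) ` P)"
  have "finite P" "P \<noteq> {}"
    using \<open>finite K\<close> \<nu>(1) by (auto simp: P_def)
  then have "\<theta> \<in> (\<lambda>k. a k / \<nu> k) ` P"
    unfolding \<theta>_def by (intro Min_in) auto
  then obtain k1 where k1: "k1 \<in> P" "\<theta> = a k1 / \<nu> k1"
    by blast
  have \<theta>_le: "\<theta> * \<nu> k \<le> a k" if "k \<in> K" for k
  proof (cases "\<nu> k > 0")
    case True
    then have "\<theta> \<le> a k / \<nu> k"
      unfolding \<theta>_def using \<open>finite P\<close> that by (intro Min_le) (auto simp: P_def)
    with True show ?thesis
      by (simp add: field_simps)
  next
    case False
    have "\<theta> \<ge> 0"
      using k1 nonneg by (auto simp: P_def)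
    with False have "\<theta> * \<nu> k \<le> 0"
      by (simp add: mult_nonneg_nonpos)
    with nonneg that show ?thesis
      by force
  qed
  define a' where "a' k = a k - \<theta> * \<nu> k" for k
  have "a' k1 = 0"
    using k1 by (simp add: a'_def P_def)
  moreover have "(\<Sum>k\<in>K. a k * F k i) = (\<Sum>k\<in>K. a' k * F k i)" if "i \<in> I" for i
  proof -
    have "(\<Sum>k\<in>K. a' k * F k i) = (\<Sum>k\<in>K. a k * F k i) - \<theta> * (\<Sum>k\<in>K. \<nu> k * F k i)"
      by (simp add: a'_def left_diff_distrib sum_subtractf sum_distrib_left mult.assoc)
    with \<nu>(2) that show ?thesis
      by simp
  qed
  ultimately have "\<forall>i\<in>I. (\<Sum>k\<in>K. a k * F k i) = (\<Sum>k\<in>K - {k1}. a' k * F k i)"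
    using \<open>finite K\<close> k1 by (simp add: sum.remove[of K k1] P_def)
  moreover have "\<forall>k\<in>K. 0 \<le> a' k"
    using \<theta>_le by (simp add: a'_def)
  ultimately show ?thesis
    using k1 by (auto simp: P_def)
qed

lemma conic_caratheodory:
  fixes F :: "'k \<Rightarrow> 'i \<Rightarrow> real"
  assumes "finite I" "finite K" "\<forall>k\<in>K. 0 \<le> a k"
  shows "\<exists>K' a'. K' \<subseteq> K \<and> card K' \<le> card I \<and> (\<forall>k\<in>K'. 0 \<le> a' k) \<and>
           (\<forall>i\<in>I. (\<Sum>k\<in>K. a k * F k i) = (\<Sum>k\<in>K'. a' k * F k i))"
  using assms(2,3)
proof (induction "card K" arbitrary: K a rule: less_induct)
  case less
  show ?case
  proof (cases "card K \<le> card I")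
    case False
    then obtain k1 a' where k1: "k1 \<in> K" "\<forall>k\<in>K. 0 \<le> a' k"
        "\<forall>i\<in>I. (\<Sum>k\<in>K. a k * F k i) = (\<Sum>k\<in>K - {k1}. a' k * F k i)"
      using conic_combination_drop_one[OF \<open>finite I\<close> less.prems(1) _ less.prems(2)] by force
    moreover have "card (K - {k1}) < card K"
      using less.prems(1) k1(1) by (rule card_Diff1_less)
    ultimately obtain K' a'' where "K' \<subseteq> K - {k1}" "card K' \<le> card I" "\<forall>k\<in>K'. 0 \<le> a'' k"
        "\<forall>i\<in>I. (\<Sum>k\<in>K - {k1}. a' k * F k i) = (\<Sum>k\<in>K'. a'' k * F k i)"
      using less.hyps[of "K - {k1}" a'] less.prems(1) by auto
    with k1(3) show ?thesis
      by (intro exI[of _ K'] exI[of _ a'']) auto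
  qed (use less.prems in blast)
qed

definition nonneg_rank_one_sum :: "nat \<Rightarrow> nat \<Rightarrow> ('n::finite) tensor \<Rightarrow> bool" where
  "nonneg_rank_one_sum m D A \<longleftrightarrow>
     (\<exists>us. length us \<le> D \<and> (\<forall>u\<in>set us. \<forall>i. 0 \<le> u $ i) \<and>
        (\<forall>is\<in>index_lists m. A is = (\<Sum>u\<leftarrow>us. rank_one u is)))"

lemma nonneg_rank_one_sum_nonneg:
  "nonneg_rank_one_sum m D A \<Longrightarrow> is \<in> index_lists m \<Longrightarrow> 0 \<le> A is"
  unfolding nonneg_rank_one_sum_def by (auto intro!: sum_list_nonneg rank_one_nonneg)

lemma nonneg_rank_one_sum_0:
  "nonneg_rank_one_sum m 0 A \<longleftrightarrow> (\<forall>is\<in>index_lists m. A is = 0)"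
  unfolding nonneg_rank_one_sum_def by auto

lemma nonneg_rank_one_sum_Suc:
  assumes "m \<ge> 1"
  shows "nonneg_rank_one_sum m (Suc D) A \<longleftrightarrow>
    (\<exists>v. (\<forall>i. 0 \<le> v $ i) \<and> nonneg_rank_one_sum m D (\<lambda>is. A is - rank_one v is))"
proof
  assume "nonneg_rank_one_sum m (Suc D) A"
  then obtain us where us: "length us \<le> Suc D" "\<forall>u\<in>set us. \<forall>i. 0 \<le> u $ i"
    "\<forall>is\<in>index_lists m. A is = (\<Sum>u\<leftarrow>us. rank_one u is)"
    unfolding nonneg_rank_one_sum_def by blast
  show "\<exists>v. (\<forall>i. 0 \<le> v $ i) \<and> nonneg_rank_one_sum m D (\<lambda>is. A is - rank_one v is)"
  proof (cases us)
    case Nil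
    have "rank_one 0 is = 0" if "is \<in> index_lists m" for "is"
      using that \<open>m \<ge> 1\<close> by (intro rank_one_zero) (auto simp: index_lists_def)
    with us Nil show ?thesis
      by (intro exI[of _ 0]) (auto simp: nonneg_rank_one_sum_def intro!: exI[of _ "[]"])
  next
    case (Cons v ws)
    with us show ?thesis
      by (intro exI[of _ v]) (auto simp: nonneg_rank_one_sum_def intro!: exI[of _ ws])
  qed
next
  assume "\<exists>v. (\<forall>i. 0 \<le> v $ i) \<and> nonneg_rank_one_sum m D (\<lambda>is. A is - rank_one v is)"
  then obtain v ws where "\<forall>i. 0 \<le> v $ i" "length ws \<le> D" "\<forall>u\<in>set ws. \<forall>i. 0 \<le> u $ i"
    "\<forall>is\<in>index_lists m. A is - rank_one v is = (\<Sum>u\<leftarrow>ws. rank_one u is)"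
    unfolding nonneg_rank_one_sum_def by blast
  then show "nonneg_rank_one_sum m (Suc D) A"
    unfolding nonneg_rank_one_sum_def by (intro exI[of _ "v # ws"]) (auto simp: algebra_simps)
qed

lemma bounded_range_of_power_le:
  fixes v :: "nat \<Rightarrow> real^'n::finite"
  assumes "m \<ge> 1" and nonneg: "\<And>j i. 0 \<le> v j $ i" and le: "\<And>j i. (v j $ i) ^ m \<le> B i"
  shows "bounded (range v)"
  unfolding bounded_iff
proof (intro exI ballI)
  have "\<bar>v j $ i\<bar> \<le> max 1 (B i)" for j i
  proof (cases "v j $ i \<le> 1")
    case False
    then have "v j $ i \<le> (v j $ i) ^ m"
      using \<open>m \<ge> 1\<close> by (intro self_le_power) auto
    with le[of j i] nonneg[of j i] show ?thesis
      by simp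
  qed (use nonneg[of j i] in simp)
  then show "norm x \<le> (\<Sum>i\<in>UNIV. max 1 (B i))" if x: "x \<in> range v" for x
  proof -
    obtain j where "x = v j"
      using x by blast
    then have "(\<Sum>i\<in>UNIV. \<bar>x $ i\<bar>) \<le> (\<Sum>i\<in>UNIV. max 1 (B i))"
      using \<open>\<And>j i. \<bar>v j $ i\<bar> \<le> max 1 (B i)\<close> by (simp add: sum_mono)
    with norm_le_l1_cart[of x] show ?thesis
      by linarith
  qed
qed

lemma nonneg_rank_one_sum_limit:
  fixes A :: "nat \<Rightarrow> ('n::finite) tensor"
  assumes "m \<ge> 1" and "\<forall>j. nonneg_rank_one_sum m D (A j)"
    and "\<forall>is\<in>index_lists m. (\<lambda>j. A j is) \<longlonglongrightarrow> L is"
  shows "nonneg_rank_one_sum m D L"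
  using assms(2,3)
proof (induction D arbitrary: A L)
  case 0
  then show ?case
    by (auto simp: nonneg_rank_one_sum_0 intro: LIMSEQ_unique)
next
  case (Suc D)
  text \<open>Peel off one summand v j of each A j; the v j are bounded because the diagonal entries
    of A j converge, so a subsequence converges and the remaining sums are handled by induction.\<close>
  have "\<forall>j. \<exists>vj. (\<forall>i. 0 \<le> vj $ i) \<and> nonneg_rank_one_sum m D (\<lambda>is. A j is - rank_one vj is)"
    using Suc.prems(1) nonneg_rank_one_sum_Suc[OF \<open>m \<ge> 1\<close>] by blast
  then obtain v where v: "\<And>j i. 0 \<le> v j $ i" "\<And>j. nonneg_rank_one_sum m D (\<lambda>is. A j is - rank_one (v j) is)"
    by metis
  have diag: "replicate m i \<in> index_lists m" for i :: 'n
    by (simp add: index_lists_def)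
  have "\<exists>b. \<forall>j. A j (replicate m i) \<le> b" for i
  proof -
    have "bounded (range (\<lambda>j. A j (replicate m i)))"
      using Suc.prems(2) diag by (intro convergent_imp_bounded) blast
    then show ?thesis
      unfolding bounded_real by (auto simp: abs_le_iff)
  qed
  then obtain B where B: "\<And>j i. A j (replicate m i) \<le> B i"
    by metis
  have "(v j $ i) ^ m \<le> B i" for j i
    using nonneg_rank_one_sum_nonneg[OF v(2) diag, of j i] B[of j i] by (simp add: rank_one_replicate)
  then have "bounded (range v)"
    by (rule bounded_range_of_power_le[OF \<open>m \<ge> 1\<close> v(1)])
  then obtain l r where r: "strict_mono r" "(v \<circ> r) \<longlonglongrightarrow> l"
    using bounded_imp_convergent_subsequence by blast
  have "0 \<le> l $ i" for i
    by (rule LIMSEQ_le_const[OF tendsto_vec_nth[OF r(2)]]) (simp add: v(1))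
  moreover have "nonneg_rank_one_sum m D (\<lambda>is. L is - rank_one l is)"
  proof (rule Suc.IH)
    show "\<forall>j. nonneg_rank_one_sum m D (\<lambda>is. A (r j) is - rank_one (v (r j)) is)"
      using v(2) by blast
    show "\<forall>is\<in>index_lists m. (\<lambda>j. A (r j) is - rank_one (v (r j)) is) \<longlonglongrightarrow> L is - rank_one l is"
      using Suc.prems(2) LIMSEQ_subseq_LIMSEQ[OF _ r(1)] tendsto_rank_one[OF r(2)]
      by (auto intro!: tendsto_diff simp: o_def)
  qed
  ultimately show ?case
    using nonneg_rank_one_sum_Suc[OF \<open>m \<ge> 1\<close>] by blast
qed

lemma nonneg_rank_one_sum_of_finite_sum:
  fixes U :: "'k \<Rightarrow> real^'n::finite"
  assumes "m \<ge> 1" "finite K" and nonneg: "\<And>k i. k \<in> K \<Longrightarrow> 0 \<le> U k $ i"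
    and A: "\<forall>is\<in>index_lists m. A is = (\<Sum>k\<in>K. rank_one (U k) is)"
  shows "nonneg_rank_one_sum m (card (index_lists m :: 'n list set)) A"
proof -
  obtain K' a where K': "K' \<subseteq> K" "card K' \<le> card (index_lists m :: 'n list set)" "\<forall>k\<in>K'. 0 \<le> a k"
      "\<forall>is\<in>index_lists m. (\<Sum>k\<in>K. 1 * rank_one (U k) is) = (\<Sum>k\<in>K'. a k * rank_one (U k) is)"
    using conic_caratheodory[OF finite_index_lists[of m] \<open>finite K\<close>, where a = "\<lambda>_. 1" and F = "\<lambda>k is. rank_one (U k) is"]
    by auto
  obtain ks where ks: "set ks = K'" "distinct ks"
    using finite_distinct_list[OF finite_subset[OF K'(1) \<open>finite K\<close>]] by blast
  show ?thesis
    unfolding nonneg_rank_one_sum_def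
  proof (intro exI[of _ "map (\<lambda>k. root m (a k) *\<^sub>R U k) ks"] conjI ballI allI)
    show "length (map (\<lambda>k. root m (a k) *\<^sub>R U k) ks) \<le> card (index_lists m :: 'n list set)"
      using K'(2) ks distinct_card by fastforce
    show "0 \<le> u $ i" if "u \<in> set (map (\<lambda>k. root m (a k) *\<^sub>R U k) ks)" for u i
      using that ks K'(1,3) nonneg by (force intro!: mult_nonneg_nonneg real_root_ge_zero)
    fix "is" :: "'n list" assume "is": "is \<in> index_lists m"
    have "rank_one (root m (a k) *\<^sub>R U k) is = a k * rank_one (U k) is" if "k \<in> K'" for k
      using "is" K'(3) that \<open>m \<ge> 1\<close> by (simp add: rank_one_scaleR index_lists_def)
    then have "(\<Sum>u\<leftarrow>map (\<lambda>k. root m (a k) *\<^sub>R U k) ks. rank_one u is) = (\<Sum>k\<in>K'. a k * rank_one (U k) is)"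
      using ks by (simp add: sum_list_distinct_conv_sum_set comp_def)
    then show "A is = (\<Sum>u\<leftarrow>map (\<lambda>k. root m (a k) *\<^sub>R U k) ks. rank_one u is)"
      using A K'(4) "is" by simp
  qed
qed

lemma sum_list_map_pos:
  fixes f :: "'a \<Rightarrow> 'b::ordered_comm_monoid_add"
  assumes "\<And>x. 0 < f x" and "xs \<noteq> []"
  shows "0 < sum_list (map f xs)"
proof -
  have "f (hd xs) \<le> sum_list (map f xs)"
    using assms by (intro member_le_sum_list) (auto intro: less_imp_le)
  with assms(1) show ?thesis
    by (rule less_le_trans)
qed

lemma nonneg_rank_one_sum_geometric:
  fixes c :: "real^'n::finite"
  assumes "m \<ge> 1" "0 < q" "q < 1" and pos: "\<forall>i. c $ i > 0"
  shows "nonneg_rank_one_sum m (card (index_lists m :: 'n list set))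
           (\<lambda>is. (1 - q) / (1 - q powr sum_list (map (\<lambda>i. c $ i) is)))"
proof (rule nonneg_rank_one_sum_limit[OF \<open>m \<ge> 1\<close>])
  let ?s = "\<lambda>is. sum_list (map (\<lambda>i. c $ i) is)"
  define U where "U k = (\<chi> i. root m (1 - q) * (q powr c $ i) ^ k)" for k :: nat
  have rank_one_U: "rank_one (U k) is = root m (1 - q) ^ length is * (q powr ?s is) ^ k" for k "is"
    using \<open>0 < q\<close> by (induction "is") (simp_all add: U_def powr_add power_mult_distrib)
  show "\<forall>N. nonneg_rank_one_sum m (card (index_lists m :: 'n list set))
              (\<lambda>is. \<Sum>k<N. (1 - q) * (q powr ?s is) ^ k)"
  proof
    fix N
    show "nonneg_rank_one_sum m (card (index_lists m :: 'n list set))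
            (\<lambda>is. \<Sum>k<N. (1 - q) * (q powr ?s is) ^ k)"
    proof (rule nonneg_rank_one_sum_of_finite_sum[where K = "{..<N}" and U = U])
      show "0 \<le> U k $ i" for k i
        using \<open>q < 1\<close> by (simp add: U_def real_root_ge_zero)
      show "\<forall>is\<in>index_lists m. (\<Sum>k<N. (1 - q) * (q powr ?s is) ^ k) = (\<Sum>k\<in>{..<N}. rank_one (U k) is)"
        using \<open>m \<ge> 1\<close> \<open>q < 1\<close> by (simp add: rank_one_U index_lists_def)
    qed (use \<open>m \<ge> 1\<close> in simp_all)
  qed
  show "\<forall>is\<in>index_lists m. (\<lambda>N. \<Sum>k<N. (1 - q) * (q powr ?s is) ^ k)
          \<longlonglongrightarrow> (1 - q) / (1 - q powr ?s is)"
  proof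
    fix "is" :: "'n list" assume "is \<in> index_lists m"
    then have "?s is > 0"
      using \<open>m \<ge> 1\<close> pos by (intro sum_list_map_pos) (auto simp: index_lists_def)
    then have "norm (q powr ?s is) < 1"
      using \<open>0 < q\<close> \<open>q < 1\<close> powr_less_mono2[of "?s is" q 1] by simp
    then have "(\<lambda>k. (1 - q) * (q powr ?s is) ^ k) sums ((1 - q) * (1 / (1 - q powr ?s is)))"
      by (intro sums_mult geometric_sums)
    then show "(\<lambda>N. \<Sum>k<N. (1 - q) * (q powr ?s is) ^ k) \<longlonglongrightarrow> (1 - q) / (1 - q powr ?s is)"
      by (simp add: sums_def)
  qed
qed

lemma cauchy_tensor_nonneg_rank_one_sum:
  fixes c :: "real^'n::finite"
  assumes "m \<ge> 1" and pos: "\<forall>i. c $ i > 0"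
  shows "nonneg_rank_one_sum m (card (index_lists m :: 'n list set)) (cauchy_tensor c)"
proof (rule nonneg_rank_one_sum_limit[OF \<open>m \<ge> 1\<close>])
  let ?s = "\<lambda>is. sum_list (map (\<lambda>i. c $ i) is)"
  let ?q = "\<lambda>j::nat. 1 - 1 / (real j + 2)"
  have "0 < ?q j" "?q j < 1" for j
    by (simp_all add: field_simps)
  then show "\<forall>j. nonneg_rank_one_sum m (card (index_lists m :: 'n list set))
              (\<lambda>is. (1 - ?q j) / (1 - ?q j powr ?s is))"
    using nonneg_rank_one_sum_geometric[OF \<open>m \<ge> 1\<close> _ _ pos] by blast
  have lim: "(\<lambda>j. (1 / (real j + 2)) / (1 - (1 - 1 / (real j + 2)) powr s)) \<longlonglongrightarrow> inverse s"
    if "s > 0" for s :: real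
    using that by real_asymp
  show "\<forall>is\<in>index_lists m. (\<lambda>j. (1 - ?q j) / (1 - ?q j powr ?s is)) \<longlonglongrightarrow> cauchy_tensor c is"
  proof
    fix "is" :: "'n list" assume "is \<in> index_lists m"
    then have "?s is > 0"
      using \<open>m \<ge> 1\<close> pos by (intro sum_list_map_pos) (auto simp: index_lists_def)
    then show "(\<lambda>j. (1 - ?q j) / (1 - ?q j powr ?s is)) \<longlonglongrightarrow> cauchy_tensor c is"
      using lim by (simp add: cauchy_tensor_def inverse_eq_divide)
  qed
qed

theorem mainTheorem18:
  fixes c :: "real^'n::finite" and m :: nat
  assumes "m \<ge> 2"
    and "\<forall>i. c $ i > 0"
  shows "(inj (\<lambda>i. c $ i) \<longleftrightarrow> strongly_doubly_nonnegative m (cauchy_tensor c))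
       \<and> (strongly_doubly_nonnegative m (cauchy_tensor c) \<longleftrightarrow> strongly_completely_positive m (cauchy_tensor c))"
proof -
  obtain us where nonneg: "\<forall>u\<in>set us. \<forall>i. 0 \<le> u $ i"
    and dec: "\<forall>is\<in>index_lists m. cauchy_tensor c is = (\<Sum>u\<leftarrow>us. rank_one u is)"
    using cauchy_tensor_nonneg_rank_one_sum[of m c] assms unfolding nonneg_rank_one_sum_def by auto
  have sdnn_iff_span: "strongly_doubly_nonnegative m (cauchy_tensor c) \<longleftrightarrow> span (set us) = UNIV"
    by (rule strongly_doubly_nonnegative_sum_rank_one_iff[OF \<open>m \<ge> 2\<close> nonneg dec])
  have "inj (\<lambda>i. c $ i) \<longleftrightarrow> strongly_doubly_nonnegative m (cauchy_tensor c)"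
  proof
    assume "inj (\<lambda>i. c $ i)"
    then show "strongly_doubly_nonnegative m (cauchy_tensor c)"
      using sdnn_iff_span cauchy_tensor_decomposition_spans[OF assms _ dec] by blast
  next
    assume sdnn: "strongly_doubly_nonnegative m (cauchy_tensor c)"
    show "inj (\<lambda>i. c $ i)"
    proof (rule ccontr)
      assume "\<not> inj (\<lambda>i. c $ i)"
      then obtain a b where "c $ a = c $ b" "a \<noteq> b"
        by (auto simp: inj_def)
      then have "H_eigenvalue m (cauchy_tensor c) 0"
        by (rule cauchy_tensor_H_eigenvalue_zero[OF \<open>m \<ge> 2\<close>])
      with sdnn show False
        by (auto simp: strongly_doubly_nonnegative_def)
    qed
  qed
  moreover have "strongly_doubly_nonnegative m (cauchy_tensor c) \<longleftrightarrow> strongly_completely_positive m (cauchy_tensor c)"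
    using sdnn_iff_span nonneg dec strongly_completely_positive_imp_strongly_doubly_nonnegative[OF \<open>m \<ge> 2\<close>]
    unfolding strongly_completely_positive_def by blast
  ultimately show ?thesis
    by blast
qed

end
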